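(* Assume Assumptions B and C hold, let $w^{(t)}$ be generated by Algorithm 2 and $\eta^{(t)}=D\sqrt{\varepsilon}$ for some $D>0$. Then for all $i\in[n]$ and $0\le t<T$, $$\|\epsilon_i^{(t)}\|^2\le c\big(2+(V+\varepsilon^2+2)GD^2\big)^2\varepsilon^2.$$
   Context: Let $n,c,d$ be positive integers and $[n]=\{1,\dots,n\}$. For each $i\in[n]$ let $h(\cdot;i):\mathbb{R}^d\to\mathbb{R}^c$ (components $h_j(\cdot;i)$) and $\phi_i:\mathbb{R}^c\to\mathbb{R}$ differentiable. Norms: Euclidean for vectors, operator for matrices. Assumption B: each $h(\cdot;i)$ is twice continuously differentiable and there is $G>0$ with $\|\nabla_w^2 h_j(w;i)\|\le G$ for all $w,i,j$. Iteration setup: given $\varepsilon>0$, $\eta^{(t)}>0$, $\alpha_i^{(t)}>0$ and iterates $w^{(t)}$, let $H_i^{(t)}$ be the Jacobian of $h(\cdot;i)$ at $w^{(t)}$, $\Phi^{(t)}(v)=\frac{1}{2n}\sum_{i=1}^n\|\eta^{(t)}H_i^{(t)}v-\alpha_i^{(t)}\nabla\phi_i(h(w^{(t)};i))\|^2$, $\Psi^{(t)}(v)=\Phi^{(t)}(v)+\frac{\varepsilon^2}{2}\|v\|^2$, $v_{*\mathrm{reg}}^{(t)}$ its unique minimizer. Algorithm 2: $w^{(t+1)}=w^{(t)}-\eta^{(t)}v^{(t)}$ where $\|v^{(t)}-v_{*\mathrm{reg}}^{(t)}\|\le\varepsilon$, $t=0,\dots,T-1$. Assumption C (constant $V>0$):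 for each $0\le t<T$ there is $\hat v^{(t)}$ with $\|\hat v^{(t)}\|^2\le V$ and $\Phi^{(t)}(\hat v^{(t)})\le\varepsilon^2$. Error vector: $\epsilon_i^{(t)}=h(w^{(t+1)};i)-h(w^{(t)};i)+\eta^{(t)}H_i^{(t)}v^{(t)}\in\mathbb{R}^c$. *)

theory Defs
  imports "HOL-Analysis.Analysis"
begin

definition grad :: "(real^'c \<Rightarrow> real) \<Rightarrow> real^'c \<Rightarrow> real^'c" where
  "grad f x = (\<chi> k. frechet_derivative f (at x) (axis k 1))"

definition jac :: "(real^'d \<Rightarrow> real^'c) \<Rightarrow> real^'d \<Rightarrow> real^'d^'c" where
  "jac h w = matrix (frechet_derivative h (at w))"

text \<open>Assumption B for a single map: h is twice continuously differentiable and every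
  component h_j has Hessian of operator norm at most G everywhere.\<close>
definition C2_hessian_bounded :: "(real^'d \<Rightarrow> real^'c) \<Rightarrow> real \<Rightarrow> bool" where
  "C2_hessian_bounded h G \<longleftrightarrow>
     (\<forall>j. \<exists>g :: real^'d \<Rightarrow> real^'d. \<exists>Hs :: real^'d \<Rightarrow> real^'d^'d.
        (\<forall>w. ((\<lambda>u. h u $ j) has_derivative (\<lambda>v. g w \<bullet> v)) (at w)) \<and>
        (\<forall>w. (g has_derivative (\<lambda>v. Hs w *v v)) (at w)) \<and>
        continuous_on UNIV Hs \<and>
        (\<forall>w. onorm (\<lambda>v. Hs w *v v) \<le> G))"

definition Phi :: "nat \<Rightarrow> (nat \<Rightarrow> real^'d \<Rightarrow> real^'c) \<Rightarrow> (nat \<Rightarrow> real^'c \<Rightarrow> real)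
     \<Rightarrow> real \<Rightarrow> (nat \<Rightarrow> real) \<Rightarrow> real^'d \<Rightarrow> real^'d \<Rightarrow> real" where
  "Phi n h phi eta alpha w v =
     (1 / (2 * real n)) * (\<Sum>i\<in>{1..n}.
        (norm (eta *\<^sub>R (jac (h i) w *v v) - alpha i *\<^sub>R grad (phi i) (h i w)))\<^sup>2)"

definition Psi :: "nat \<Rightarrow> (nat \<Rightarrow> real^'d \<Rightarrow> real^'c) \<Rightarrow> (nat \<Rightarrow> real^'c \<Rightarrow> real)
     \<Rightarrow> real \<Rightarrow> (nat \<Rightarrow> real) \<Rightarrow> real^'d \<Rightarrow> real \<Rightarrow> real^'d \<Rightarrow> real" where
  "Psi n h phi eta alpha w \<epsilon> v = Phi n h phi eta alpha w v + \<epsilon>\<^sup>2 / 2 * (norm v)\<^sup>2"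

end

theory Submission
  imports Defs
begin

text \<open>Each component of the linearization error is a second-order Taylor remainder along the
  segment from \<open>w\<close> to \<open>w + d\<close>, hence at most \<open>G/2 \<parallel>d\<parallel>\<^sup>2\<close>. The step is \<open>d = -\<eta> v\<close> with
  \<open>\<eta>\<^sup>2 = D\<^sup>2 \<epsilon>\<close>, so it remains to bound \<open>\<parallel>v\<parallel>\<close>: comparing the regularized objective at its
  minimizer with the point of Assumption C gives \<open>\<parallel>v\<^sub>r\<^sub>e\<^sub>g\<parallel>\<^sup>2 \<le> 2 + V\<close>, and inexactness adds
  at most \<open>\<epsilon>\<close>.\<close>

lemma second_order_taylor_bound:
  fixes f :: "'a::real_inner \<Rightarrow> real" and g :: "'a \<Rightarrow> 'a" and H :: "'a \<Rightarrow> 'a \<Rightarrow> 'a"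
  assumes f_deriv: "\<And>x. (f has_derivative (\<lambda>v. g x \<bullet> v)) (at x)"
    and g_deriv: "\<And>x. (g has_derivative H x) (at x)"
    and H_bound: "\<And>x. onorm (H x) \<le> G"
  shows "\<bar>f (w + d) - f w - g w \<bullet> d\<bar> \<le> G / 2 * (norm d)\<^sup>2"
proof -
  define diff :: "nat \<Rightarrow> real \<Rightarrow> real" where
    "diff m = (if m = 0 then (\<lambda>s. f (w + s *\<^sub>R d))
               else if m = 1 then (\<lambda>s. g (w + s *\<^sub>R d) \<bullet> d)
               else (\<lambda>s. H (w + s *\<^sub>R d) d \<bullet> d))" for m
  have segment: "((\<lambda>s. w + s *\<^sub>R d) has_derivative (\<lambda>s. s *\<^sub>R d)) (at s)" for s
    by (auto intro!: derivative_eq_intros)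
  have linear_H: "linear (H x)" for x
    using g_deriv[of x] by (simp add: has_derivative_linear)
  have "DERIV (diff 0) s :> diff 1 s" for s
    using has_derivative_compose[OF segment f_deriv]
    by (simp add: has_field_derivative_def diff_def mult_commute_abs)
  moreover have "DERIV (diff 1) s :> diff 2 s" for s
  proof -
    have "((\<lambda>s. g (w + s *\<^sub>R d) \<bullet> d) has_derivative (\<lambda>x. H (w + s *\<^sub>R d) (x *\<^sub>R d) \<bullet> d)) (at s)"
      using has_derivative_compose[OF segment g_deriv] by (rule has_derivative_inner_left)
    then show ?thesis
      by (simp add: has_field_derivative_def diff_def mult_commute_abs linear.scaleR[OF linear_H])
  qed
  ultimately have "\<forall>m t. m < 2 \<and> 0 \<le> t \<and> t \<le> 1 \<longrightarrow> DERIV (diff m) t :> diff (Suc m) t"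
    by (metis One_nat_def less_2_cases numeral_2_eq_2)
  from Maclaurin[OF _ _ _ this, of "diff 0"]
  obtain t where "f (w + d) = (\<Sum>m<2. diff m 0 / fact m * 1 ^ m) + diff 2 t / fact 2 * 1 ^ 2"
    by (auto simp: diff_def)
  then have remainder: "f (w + d) - f w - g w \<bullet> d = H (w + t *\<^sub>R d) d \<bullet> d / 2"
    by (simp add: diff_def numeral_2_eq_2)
  have "\<bar>H (w + t *\<^sub>R d) d \<bullet> d\<bar> \<le> norm (H (w + t *\<^sub>R d) d) * norm d"
    by (rule Cauchy_Schwarz_ineq2)
  also have "\<dots> \<le> (onorm (H (w + t *\<^sub>R d)) * norm d) * norm d"
    using g_deriv has_derivative_bounded_linear by (intro mult_right_mono onorm) auto
  also have "\<dots> \<le> (G * norm d) * norm d"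
    by (intro mult_right_mono H_bound) auto
  finally show ?thesis
    unfolding remainder by (simp add: power2_eq_square)
qed

lemma C2_hessian_boundedE:
  fixes h :: "real^'d \<Rightarrow> real^'c"
  assumes "C2_hessian_bounded h G"
  obtains g :: "'c \<Rightarrow> real^'d \<Rightarrow> real^'d" and Hs :: "'c \<Rightarrow> real^'d \<Rightarrow> real^'d^'d"
  where "\<And>j w. ((\<lambda>u. h u $ j) has_derivative (\<lambda>v. g j w \<bullet> v)) (at w)"
    and "\<And>j w. (g j has_derivative (\<lambda>v. Hs j w *v v)) (at w)"
    and "\<And>j w. onorm (\<lambda>v. Hs j w *v v) \<le> G"
proof -
  from assms have "\<forall>j. \<exists>g Hs. (\<forall>w. ((\<lambda>u. h u $ j) has_derivative (\<lambda>v. g w \<bullet> v)) (at w)) \<and>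
      (\<forall>w. (g has_derivative (\<lambda>v. Hs w *v v)) (at w)) \<and> (\<forall>w. onorm (\<lambda>v. Hs w *v v) \<le> G)"
    unfolding C2_hessian_bounded_def by blast
  then obtain g where "\<forall>j. \<exists>Hs. (\<forall>w. ((\<lambda>u. h u $ j) has_derivative (\<lambda>v. g j w \<bullet> v)) (at w)) \<and>
      (\<forall>w. (g j has_derivative (\<lambda>v. Hs w *v v)) (at w)) \<and> (\<forall>w. onorm (\<lambda>v. Hs w *v v) \<le> G)"
    by (rule choice[THEN exE])
  then obtain Hs where "\<forall>j. (\<forall>w. ((\<lambda>u. h u $ j) has_derivative (\<lambda>v. g j w \<bullet> v)) (at w)) \<and>
      (\<forall>w. (g j has_derivative (\<lambda>v. Hs j w *v v)) (at w)) \<and> (\<forall>w. onorm (\<lambda>v. Hs j w *v v) \<le> G)"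
    by (rule choice[THEN exE])
  with that show ?thesis by blast
qed

lemma jac_mult_vector_componentwise:
  fixes h :: "real^'d \<Rightarrow> real^'c"
  assumes "\<And>j. ((\<lambda>u. h u $ j) has_derivative (\<lambda>v. g j \<bullet> v)) (at w)"
  shows "jac h w *v d = (\<chi> j. g j \<bullet> d)"
proof -
  define F where "F = (\<lambda>v. \<chi> j. g j \<bullet> v)"
  have h_deriv: "(h has_derivative F) (at w)"
  proof (rule has_derivative_componentwise_within[THEN iffD2], intro ballI)
    fix b :: "real^'c" assume "b \<in> Basis"
    then obtain j where "b = axis j 1" by (auto simp: Basis_vec_def)
    then show "((\<lambda>x. h x \<bullet> b) has_derivative (\<lambda>x. F x \<bullet> b)) (at w)"
      using assms[of j] by (simp add: F_def inner_axis)
  qed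
  then have "bounded_linear F" by (rule has_derivative_bounded_linear)
  then show ?thesis
    unfolding jac_def frechet_derivative_at[OF h_deriv, symmetric]
    using fun_cong[OF matrix_vector_mul(3), of F d] by (simp add: F_def)
qed

lemma norm_le_card_mult_component_bound:
  fixes x :: "real^'c"
  assumes "\<And>j. \<bar>x $ j\<bar> \<le> B"
  shows "(norm x)\<^sup>2 \<le> real CARD('c) * B\<^sup>2"
proof -
  have "(norm x)\<^sup>2 = (\<Sum>j\<in>UNIV. (x $ j)\<^sup>2)"
    unfolding power2_norm_eq_inner by (simp add: inner_vec_def power2_eq_square)
  also have "\<dots> \<le> (\<Sum>j\<in>(UNIV::'c set). B\<^sup>2)"
    using assms by (intro sum_mono) (metis abs_ge_zero power2_abs power_mono)
  finally show ?thesis by simp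
qed

lemma linearization_error_bound:
  fixes h :: "real^'d \<Rightarrow> real^'c"
  assumes "C2_hessian_bounded h G"
  shows "(norm (h (w + d) - h w - jac h w *v d))\<^sup>2 \<le> real CARD('c) * (G / 2 * (norm d)\<^sup>2)\<^sup>2"
proof -
  obtain g Hs where
    g: "\<And>j w. ((\<lambda>u. h u $ j) has_derivative (\<lambda>v. g j w \<bullet> v)) (at w)" and
    Hs: "\<And>j w. (g j has_derivative (\<lambda>v. Hs j w *v v)) (at w)"
        "\<And>j w. onorm (\<lambda>v. Hs j w *v v) \<le> G"
    using C2_hessian_boundedE[OF assms] by blast
  show ?thesis
  proof (rule norm_le_card_mult_component_bound)
    fix j
    show "\<bar>(h (w + d) - h w - jac h w *v d) $ j\<bar> \<le> G / 2 * (norm d)\<^sup>2"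
      using second_order_taylor_bound[OF g[of j] Hs(1)[of j] Hs(2)[of j], of w d]
      by (simp add: jac_mult_vector_componentwise[OF g])
  qed
qed

lemma Phi_nonneg: "0 \<le> Phi n h phi eta alpha w v"
  unfolding Phi_def by (intro mult_nonneg_nonneg sum_nonneg) auto

lemma Psi_minimizer_norm_bound:
  assumes eps_pos: "\<epsilon> > 0"
    and minimal: "Psi n h phi eta alpha w \<epsilon> vreg \<le> Psi n h phi eta alpha w \<epsilon> vh"
    and vh_norm: "(norm vh)\<^sup>2 \<le> V"
    and vh_Phi: "Phi n h phi eta alpha w vh \<le> \<epsilon>\<^sup>2"
  shows "(norm vreg)\<^sup>2 \<le> 2 + V"
proof -
  have "\<epsilon>\<^sup>2 / 2 * (norm vreg)\<^sup>2 \<le> Psi n h phi eta alpha w \<epsilon> vreg"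
    unfolding Psi_def using Phi_nonneg by simp
  also have "\<dots> \<le> Psi n h phi eta alpha w \<epsilon> vh"
    by (fact minimal)
  also have "\<dots> \<le> \<epsilon>\<^sup>2 + \<epsilon>\<^sup>2 / 2 * V"
    unfolding Psi_def using vh_norm vh_Phi by (intro add_mono mult_left_mono) auto
  also have "\<dots> = \<epsilon>\<^sup>2 / 2 * (2 + V)"
    by (simp add: algebra_simps)
  finally show ?thesis
    using eps_pos by simp
qed

lemma norm_sq_le_of_dist_le:
  fixes v u :: "'a::real_normed_vector"
  assumes "norm (v - u) \<le> e"
  shows "(norm v)\<^sup>2 \<le> 2 * (norm u)\<^sup>2 + 2 * e\<^sup>2"
proof -
  have "norm v \<le> norm u + e"
    using assms norm_triangle_sub[of v u] by simp
  then have "(norm v)\<^sup>2 \<le> (norm u + e)\<^sup>2"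
    by (intro power_mono) auto
  also have "\<dots> \<le> 2 * (norm u)\<^sup>2 + 2 * e\<^sup>2"
    by (simp add: power2_sum) (smt (verit) sum_squares_bound)
  finally show ?thesis .
qed

theorem mainTheorem15:
  fixes n :: nat and T :: nat
    and h :: "nat \<Rightarrow> real^'d \<Rightarrow> real^'c"
    and phi :: "nat \<Rightarrow> real^'c \<Rightarrow> real"
    and G V D \<epsilon> :: real
    and eta :: "nat \<Rightarrow> real" and alpha :: "nat \<Rightarrow> nat \<Rightarrow> real"
    and w v vreg :: "nat \<Rightarrow> real^'d"
  assumes n_pos: "n > 0"
    and phi_diff: "\<forall>i\<in>{1..n}. \<forall>x. phi i differentiable (at x)"
    and G_pos: "G > 0"
    and assmB: "\<forall>i\<in>{1..n}. C2_hessian_bounded (h i) G"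
    and eps_pos: "\<epsilon> > 0"
    and D_pos: "D > 0"
    and eta_def: "\<forall>t<T. eta t = D * sqrt \<epsilon>"
    and alpha_pos: "\<forall>t<T. \<forall>i\<in>{1..n}. alpha i t > 0"
    and vreg_min: "\<forall>t<T. \<forall>u. Psi n h phi (eta t) (\<lambda>i. alpha i t) (w t) \<epsilon> (vreg t)
                                 \<le> Psi n h phi (eta t) (\<lambda>i. alpha i t) (w t) \<epsilon> u"
    and alg_step: "\<forall>t<T. w (Suc t) = w t - eta t *\<^sub>R v t"
    and alg_inexact: "\<forall>t<T. norm (v t - vreg t) \<le> \<epsilon>"
    and V_pos: "V > 0"
    and assmC: "\<forall>t<T. \<exists>vh. (norm vh)\<^sup>2 \<le> V \<and>
                          Phi n h phi (eta t) (\<lambda>i. alpha i t) (w t) vh \<le> \<epsilon>\<^sup>2"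
  shows "\<forall>i\<in>{1..n}. \<forall>t<T.
           (norm (h i (w (Suc t)) - h i (w t) + eta t *\<^sub>R (jac (h i) (w t) *v v t)))\<^sup>2
             \<le> real CARD('c) * (2 + (V + \<epsilon>\<^sup>2 + 2) * G * D\<^sup>2)\<^sup>2 * \<epsilon>\<^sup>2"
proof (intro ballI allI impI)
  fix i t assume i: "i \<in> {1..n}" and t: "t < T"
  obtain vh where "(norm vh)\<^sup>2 \<le> V" "Phi n h phi (eta t) (\<lambda>i. alpha i t) (w t) vh \<le> \<epsilon>\<^sup>2"
    using assmC t by blast
  then have "(norm (vreg t))\<^sup>2 \<le> 2 + V"
    using Psi_minimizer_norm_bound eps_pos vreg_min t by blast
  then have v_norm: "(norm (v t))\<^sup>2 \<le> 2 * (V + \<epsilon>\<^sup>2 + 2)"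
    using norm_sq_le_of_dist_le[of "v t" "vreg t" \<epsilon>] alg_inexact t by simp
  define d where "d = (- eta t) *\<^sub>R v t"
  have step_error: "h i (w (Suc t)) - h i (w t) + eta t *\<^sub>R (jac (h i) (w t) *v v t)
      = h i (w t + d) - h i (w t) - jac (h i) (w t) *v d"
    using alg_step t unfolding d_def matrix_vector_mult_scaleR by simp
  have "G / 2 * (norm d)\<^sup>2 = G * D\<^sup>2 * \<epsilon> * ((norm (v t))\<^sup>2 / 2)"
    using eta_def t eps_pos by (simp add: d_def power_mult_distrib)
  also have "\<dots> \<le> G * D\<^sup>2 * \<epsilon> * (V + \<epsilon>\<^sup>2 + 2)"
    using v_norm G_pos eps_pos by (intro mult_left_mono) auto
  also have "\<dots> \<le> (2 + (V + \<epsilon>\<^sup>2 + 2) * G * D\<^sup>2) * \<epsilon>"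
    using eps_pos by (simp add: algebra_simps)
  finally have "(G / 2 * (norm d)\<^sup>2)\<^sup>2 \<le> ((2 + (V + \<epsilon>\<^sup>2 + 2) * G * D\<^sup>2) * \<epsilon>)\<^sup>2"
    using G_pos by (intro power_mono) auto
  then have "real CARD('c) * (G / 2 * (norm d)\<^sup>2)\<^sup>2
      \<le> real CARD('c) * (2 + (V + \<epsilon>\<^sup>2 + 2) * G * D\<^sup>2)\<^sup>2 * \<epsilon>\<^sup>2"
    by (simp add: mult_left_mono power_mult_distrib)
  with linearization_error_bound[OF assmB[rule_format, OF i], of "w t" d]
  show "(norm (h i (w (Suc t)) - h i (w t) + eta t *\<^sub>R (jac (h i) (w t) *v v t)))\<^sup>2
      \<le> real CARD('c) * (2 + (V + \<epsilon>\<^sup>2 + 2) * G * D\<^sup>2)\<^sup>2 * \<epsilon>\<^sup>2"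
    unfolding step_error by linarith
qed

end
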